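(* Let $(X,\mathcal{M},\mu)$ be a measure space and $\Phi$ an $N^*$-function for which there is a constant $k\ge2$ with $\Phi(kx)=2\Phi(x)$ for all $x>0$. Then $\|f\|_\Phi=\inf\{\lambda>0:\int_X\Phi(|f|/\lambda)\,d\mu\le1\}$ is a quasi-norm on $L_\Phi(X)$: $\|f\|_\Phi=0$ iff $f=0$, $\|\alpha f\|_\Phi=|\alpha|\,\|f\|_\Phi$ for $\alpha\in\mathbb{R}$, and $\|f+g\|_\Phi\le k(\|f\|_\Phi+\|g\|_\Phi)$ for all $f,g\in L_\Phi(X)$.
   Context: An $N^*$-function is a function $\Phi:\mathbb{R}\to\mathbb{R}$ of the form $\Phi(x)=\int_0^{|x|}p(t)\,dt<+\infty$ for all $x$, where $p:[0,\infty)\to[0,\infty]$ is right-continuous, positive on $(0,\infty)$, non-increasing, and satisfies $\lim_{t\to0^+}p(t)=+\infty$ and $\lim_{t\to+\infty}p(t)=0$. $L_\Phi(X)$ is the space of (classes modulo a.e. equality of) measurable $f:X\to\mathbb{R}$ with $\int_X\Phi(f)\,d\mu<\infty$. *)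

theory Defs
  imports "HOL-Analysis.Analysis"
begin

text \<open>N*-function: Phi x = integral of p over [0,|x|], finite, where the density p
  is positive, non-increasing and right-continuous on (0,inf), tends to +inf at 0+
  and to 0 at +inf. (p(0) is forced to be +inf by monotonicity; a single point
  does not affect the integral, so p is modelled as a real-valued function whose
  value at 0 is irrelevant.)\<close>
definition N_star_function :: "(real \<Rightarrow> real) \<Rightarrow> bool" where
  "N_star_function Phi \<longleftrightarrow>
    (\<exists>p :: real \<Rightarrow> real.
       (\<forall>t>0. p t > 0) \<and>
       (\<forall>s t. 0 < s \<longrightarrow> s \<le> t \<longrightarrow> p t \<le> p s) \<and>
       (\<forall>t>0. (p \<longlongrightarrow> p t) (at_right t)) \<and>
       filterlim p at_top (at_right 0) \<and>
       (p \<longlongrightarrow> 0) at_top \<and>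
       (\<forall>x. (\<integral>\<^sup>+ t\<in>{0..\<bar>x\<bar>}. ennreal (p t) \<partial>lborel) < \<infinity> \<and>
            Phi x = enn2real (\<integral>\<^sup>+ t\<in>{0..\<bar>x\<bar>}. ennreal (p t) \<partial>lborel)))"

text \<open>Orlicz class L_Phi(X): measurable real functions with finite Phi-integral
  (equivalence modulo a.e. equality is handled in the statement by using AE).\<close>
definition L_Phi :: "'a measure \<Rightarrow> (real \<Rightarrow> real) \<Rightarrow> ('a \<Rightarrow> real) set" where
  "L_Phi M Phi = {f. f \<in> borel_measurable M \<and> (\<integral>\<^sup>+ x. ennreal (Phi (f x)) \<partial>M) < \<infinity>}"

definition orlicz_norm :: "'a measure \<Rightarrow> (real \<Rightarrow> real) \<Rightarrow> ('a \<Rightarrow> real) \<Rightarrow> real" where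
  "orlicz_norm M Phi f =
     Inf {l::real. l > 0 \<and> (\<integral>\<^sup>+ x. ennreal (Phi (\<bar>f x\<bar> / l)) \<partial>M) \<le> 1}"

end

theory Submission
  imports Defs
begin

text \<open>The identity \<open>\<Phi>(k\<^sup>n x) = 2\<^sup>n \<Phi>(x)\<close> makes \<open>k\<^sup>n\<close> admissible for every \<open>f \<in> L\<^sub>\<Phi>\<close> once
  \<open>2\<^sup>n\<close> exceeds \<open>\<integral>\<Phi>(f)\<close>, so the infimum defining \<open>\<parallel>f\<parallel>\<^sub>\<Phi>\<close> is over a nonempty set; and if
  \<open>\<parallel>f\<parallel>\<^sub>\<Phi> = 0\<close> then \<open>2\<^sup>n \<integral>\<Phi>(f) \<le> 1\<close> for all \<open>n\<close>, forcing \<open>f = 0\<close> a.e.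
  For the quasi-triangle inequality put \<open>m = max (|u|/a) (|v|/b)\<close>: by monotonicity and doubling,
  \<open>2 \<Phi>(|u + v| / (k (a + b))) \<le> 2 \<Phi>(m / k) = \<Phi>(m) \<le> \<Phi>(|u|/a) + \<Phi>(|v|/b)\<close>,
  so \<open>k (a + b)\<close> is admissible for \<open>f + g\<close> whenever \<open>a\<close> is for \<open>f\<close> and \<open>b\<close> for \<open>g\<close>.\<close>

lemma N_star_functionE:
  assumes "N_star_function Phi"
  obtains p :: "real \<Rightarrow> real" where "\<And>t. t > 0 \<Longrightarrow> p t > 0"
    and "\<And>s t. 0 < s \<Longrightarrow> s \<le> t \<Longrightarrow> p t \<le> p s"
    and "\<And>x. (\<integral>\<^sup>+ t\<in>{0..\<bar>x\<bar>}. ennreal (p t) \<partial>lborel) < \<infinity>"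
    and "\<And>x. Phi x = enn2real (\<integral>\<^sup>+ t\<in>{0..\<bar>x\<bar>}. ennreal (p t) \<partial>lborel)"
  using assms unfolding N_star_function_def by blast

lemma N_star_function_abs: "N_star_function Phi \<Longrightarrow> Phi \<bar>x\<bar> = Phi x"
  by (elim N_star_functionE) simp

lemma N_star_function_0: "N_star_function Phi \<Longrightarrow> Phi 0 = 0"
proof (elim N_star_functionE)
  fix p :: "real \<Rightarrow> real"
  assume Phi: "\<And>x. Phi x = enn2real (\<integral>\<^sup>+ t\<in>{0..\<bar>x\<bar>}. ennreal (p t) \<partial>lborel)"
  have "(\<integral>\<^sup>+ t\<in>{0..0::real}. ennreal (p t) \<partial>lborel) = 0"
    by (simp add: nn_integral_indicator_singleton)
  then show "Phi 0 = 0" using Phi[of 0] by simp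
qed

lemma N_star_function_mono:
  assumes "N_star_function Phi" "0 \<le> x" "x \<le> y"
  shows "Phi x \<le> Phi y"
  using assms(1)
proof (elim N_star_functionE)
  fix p :: "real \<Rightarrow> real"
  assume fin: "\<And>x. (\<integral>\<^sup>+ t\<in>{0..\<bar>x\<bar>}. ennreal (p t) \<partial>lborel) < \<infinity>"
    and Phi: "\<And>x. Phi x = enn2real (\<integral>\<^sup>+ t\<in>{0..\<bar>x\<bar>}. ennreal (p t) \<partial>lborel)"
  have "(\<integral>\<^sup>+ t\<in>{0..\<bar>x\<bar>}. ennreal (p t) \<partial>lborel) \<le> (\<integral>\<^sup>+ t\<in>{0..\<bar>y\<bar>}. ennreal (p t) \<partial>lborel)"
    using assms(2,3) by (intro nn_integral_mono) (auto simp: indicator_def)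
  then show "Phi x \<le> Phi y"
    unfolding Phi using fin[of y] by (simp add: enn2real_mono)
qed

lemma N_star_function_pos:
  assumes "N_star_function Phi" "x > 0"
  shows "Phi x > 0"
  using assms(1)
proof (elim N_star_functionE)
  fix p :: "real \<Rightarrow> real"
  assume pos: "\<And>t. t > 0 \<Longrightarrow> p t > 0"
    and anti: "\<And>s t. 0 < s \<Longrightarrow> s \<le> t \<Longrightarrow> p t \<le> p s"
    and fin: "\<And>x. (\<integral>\<^sup>+ t\<in>{0..\<bar>x\<bar>}. ennreal (p t) \<partial>lborel) < \<infinity>"
    and Phi: "\<And>x. Phi x = enn2real (\<integral>\<^sup>+ t\<in>{0..\<bar>x\<bar>}. ennreal (p t) \<partial>lborel)"
  have "0 < ennreal (p x * x)"
    using assms(2) pos[of x] by simp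
  also have "ennreal (p x * x) = (\<integral>\<^sup>+ t. ennreal (p x) * indicator {0<..x} t \<partial>lborel)"
    using assms(2) pos[of x] by (simp add: nn_integral_cmult_indicator ennreal_mult)
  also have "\<dots> \<le> (\<integral>\<^sup>+ t\<in>{0..\<bar>x\<bar>}. ennreal (p t) \<partial>lborel)"
    using assms(2) anti by (intro nn_integral_mono) (auto simp: indicator_def intro!: ennreal_leI)
  finally show "Phi x > 0"
    unfolding Phi using fin[of x] by (simp add: enn2real_positive_iff)
qed

definition orlicz_admissible :: "'a measure \<Rightarrow> (real \<Rightarrow> real) \<Rightarrow> ('a \<Rightarrow> real) \<Rightarrow> real set" where
  "orlicz_admissible M Phi f = {l. l > 0 \<and> (\<integral>\<^sup>+ x. ennreal (Phi (\<bar>f x\<bar> / l)) \<partial>M) \<le> 1}"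

lemma orlicz_norm_eq_Inf_admissible: "orlicz_norm M Phi f = Inf (orlicz_admissible M Phi f)"
  unfolding orlicz_norm_def orlicz_admissible_def ..

lemma bdd_below_orlicz_admissible: "bdd_below (orlicz_admissible M Phi f)"
  unfolding orlicz_admissible_def by (rule bdd_belowI[of _ 0]) auto

lemma orlicz_admissible_upward_closed:
  assumes mono: "\<And>x y. 0 \<le> x \<Longrightarrow> x \<le> y \<Longrightarrow> Phi x \<le> Phi y"
    and "l \<in> orlicz_admissible M Phi f" "l \<le> l'"
  shows "l' \<in> orlicz_admissible M Phi f"
proof -
  have l: "0 < l" "(\<integral>\<^sup>+ x. ennreal (Phi (\<bar>f x\<bar> / l)) \<partial>M) \<le> 1"
    using assms(2) unfolding orlicz_admissible_def by auto
  have "(\<integral>\<^sup>+ x. ennreal (Phi (\<bar>f x\<bar> / l')) \<partial>M) \<le> (\<integral>\<^sup>+ x. ennreal (Phi (\<bar>f x\<bar> / l)) \<partial>M)"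
    using l(1) assms(3) by (intro nn_integral_mono ennreal_leI mono) (auto intro: divide_left_mono)
  with l assms(3) show ?thesis unfolding orlicz_admissible_def by simp
qed

lemma orlicz_admissible_AE_zero:
  assumes "Phi 0 = 0" "AE x in M. f x = 0"
  shows "orlicz_admissible M Phi f = {0<..}"
proof -
  have "(\<integral>\<^sup>+ x. ennreal (Phi (\<bar>f x\<bar> / l)) \<partial>M) = (\<integral>\<^sup>+ x. 0 \<partial>M)" for l
    by (rule nn_integral_cong_AE) (use assms in \<open>auto elim!: eventually_mono\<close>)
  then show ?thesis unfolding orlicz_admissible_def by auto
qed

lemma orlicz_admissible_scale:
  assumes "\<alpha> \<noteq> 0"
  shows "orlicz_admissible M Phi (\<lambda>x. \<alpha> * f x) = (\<lambda>l. \<bar>\<alpha>\<bar> * l) ` orlicz_admissible M Phi f"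
proof -
  have "\<bar>\<alpha> * y\<bar> / l = \<bar>y\<bar> / (l / \<bar>\<alpha>\<bar>)" for y l
    using assms by (simp add: abs_mult)
  moreover have "0 < l \<longleftrightarrow> 0 < l / \<bar>\<alpha>\<bar>" for l
    using assms by (simp add: zero_less_divide_iff)
  ultimately have iff: "l \<in> orlicz_admissible M Phi (\<lambda>x. \<alpha> * f x) \<longleftrightarrow> l / \<bar>\<alpha>\<bar> \<in> orlicz_admissible M Phi f" for l
    unfolding orlicz_admissible_def mem_Collect_eq by presburger
  show ?thesis
  proof (intro set_eqI iffI)
    fix l assume "l \<in> orlicz_admissible M Phi (\<lambda>x. \<alpha> * f x)"
    then show "l \<in> (\<lambda>l. \<bar>\<alpha>\<bar> * l) ` orlicz_admissible M Phi f"
      using assms iff by (intro image_eqI[of _ _ "l / \<bar>\<alpha>\<bar>"]) auto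
  next
    fix l assume "l \<in> (\<lambda>l. \<bar>\<alpha>\<bar> * l) ` orlicz_admissible M Phi f"
    then obtain m where "m \<in> orlicz_admissible M Phi f" "l = \<bar>\<alpha>\<bar> * m"
      by blast
    then show "l \<in> orlicz_admissible M Phi (\<lambda>x. \<alpha> * f x)"
      using assms by (simp add: iff)
  qed
qed

lemma Inf_scale_nonneg:
  fixes S :: "real set"
  assumes "S \<noteq> {}" "bdd_below S" "c \<ge> 0"
  shows "Inf ((\<lambda>l. c * l) ` S) = c * Inf S"
  using assms by (intro continuous_at_Inf_mono[symmetric] monoI mult_left_mono) (auto intro: continuous_intros)

lemma ennreal_eq_0_if_mult_power_le_1:
  fixes X :: ennreal
  assumes "\<And>n. ennreal (2 ^ n) * X \<le> 1"
  shows "X = 0"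
proof -
  obtain c where c: "X = ennreal c" "c \<ge> 0"
    using assms[of 0] by (cases X) (auto simp: top_unique)
  have bound: "c \<le> 1 / 2 ^ n" for n :: nat
    using assms[of n] c by (simp add: ennreal_mult[symmetric] field_simps)
  have "(\<lambda>n. 1 / 2 ^ n :: real) \<longlonglongrightarrow> 0"
    by (rule LIMSEQ_divide_realpow_zero) simp
  then have "c \<le> 0"
    by (rule LIMSEQ_le_const) (use bound in auto)
  with c show ?thesis by simp
qed

locale k_doubling_function =
  fixes Phi :: "real \<Rightarrow> real" and k :: real
  assumes Phi_abs: "\<And>x. Phi \<bar>x\<bar> = Phi x"
    and Phi_0: "Phi 0 = 0"
    and Phi_mono: "\<And>x y. 0 \<le> x \<Longrightarrow> x \<le> y \<Longrightarrow> Phi x \<le> Phi y"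
    and Phi_pos: "\<And>x. x > 0 \<Longrightarrow> Phi x > 0"
    and k_pos: "k > 0"
    and Phi_doubling: "\<And>x. x > 0 \<Longrightarrow> Phi (k * x) = 2 * Phi x"
begin

lemma Phi_nonneg: "Phi x \<ge> 0"
  using Phi_mono[of 0 "\<bar>x\<bar>"] Phi_abs[of x] Phi_0 by simp

lemma borel_measurable_Phi[measurable]: "Phi \<in> borel_measurable borel"
proof -
  have "mono (\<lambda>x. Phi (max 0 x))"
    by (intro monoI Phi_mono) auto
  then have "(\<lambda>x. Phi (max 0 x)) \<in> borel_measurable borel"
    by (rule borel_measurable_mono)
  then have "(\<lambda>x. Phi (max 0 \<bar>x\<bar>)) \<in> borel_measurable borel"
    by measurable
  then show ?thesis
    by (simp add: Phi_abs)
qed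

lemma Phi_mult_power: "Phi (k ^ n * x) = 2 ^ n * Phi x"
proof (induction n)
  case (Suc n)
  have "Phi (k ^ Suc n * x) = Phi (k * \<bar>k ^ n * x\<bar>)"
    using k_pos by (metis Phi_abs abs_mult abs_of_pos mult.assoc power_Suc)
  also have "\<dots> = 2 * Phi (k ^ n * x)"
    using k_pos Phi_0 Phi_doubling[of "\<bar>k ^ n * x\<bar>"] by (cases "x = 0") (auto simp: Phi_abs)
  finally show ?case
    using Suc by simp
qed simp

lemma nn_integral_Phi_mult_power:
  assumes "f \<in> borel_measurable M"
  shows "(\<integral>\<^sup>+ x. ennreal (Phi (k ^ n * f x)) \<partial>M) = ennreal (2 ^ n) * (\<integral>\<^sup>+ x. ennreal (Phi (f x)) \<partial>M)"
  using assms Phi_nonneg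
  by (simp add: Phi_mult_power ennreal_mult nn_integral_cmult)

lemma orlicz_admissible_nonempty:
  assumes "f \<in> L_Phi M Phi"
  shows "orlicz_admissible M Phi f \<noteq> {}"
proof -
  have f: "f \<in> borel_measurable M" "(\<integral>\<^sup>+ x. ennreal (Phi (f x)) \<partial>M) < \<infinity>"
    using assms unfolding L_Phi_def by auto
  then obtain c where c: "(\<integral>\<^sup>+ x. ennreal (Phi (f x)) \<partial>M) = ennreal c"
    using less_top_ennreal by auto
  obtain n :: nat where "c < 2 ^ n"
    using real_arch_pow[of 2 c] by auto
  have "ennreal (2 ^ n) * (\<integral>\<^sup>+ x. ennreal (Phi (\<bar>f x\<bar> / k ^ n)) \<partial>M)
      = (\<integral>\<^sup>+ x. ennreal (Phi (k ^ n * (\<bar>f x\<bar> / k ^ n))) \<partial>M)"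
    by (rule nn_integral_Phi_mult_power[symmetric]) (use f in measurable)
  also have "\<dots> = ennreal c"
    using k_pos c by (simp add: Phi_abs)
  also have "\<dots> \<le> ennreal (2 ^ n) * 1"
    using \<open>c < 2 ^ n\<close> by simp
  finally have "(\<integral>\<^sup>+ x. ennreal (Phi (\<bar>f x\<bar> / k ^ n)) \<partial>M) \<le> 1"
    by (subst (asm) ennreal_mult_le_mult_iff) auto
  then have "k ^ n \<in> orlicz_admissible M Phi f"
    using k_pos unfolding orlicz_admissible_def by simp
  then show ?thesis
    by auto
qed

lemma Phi_sum_le:
  assumes "a > 0" "b > 0"
  shows "2 * Phi (\<bar>u + v\<bar> / (k * (a + b))) \<le> Phi (\<bar>u\<bar> / a) + Phi (\<bar>v\<bar> / b)"
proof -
  define m where "m = max (\<bar>u\<bar> / a) (\<bar>v\<bar> / b)"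
  have "\<bar>u\<bar> \<le> a * m" "\<bar>v\<bar> \<le> b * m"
    using assms unfolding m_def by (auto simp: field_simps max_def)
  then have "\<bar>u + v\<bar> \<le> (a + b) * m"
    by (simp add: algebra_simps)
  then have "\<bar>u + v\<bar> / (k * (a + b)) \<le> m / k"
    using assms k_pos by (simp add: divide_simps mult.commute mult.left_commute)
  then have "2 * Phi (\<bar>u + v\<bar> / (k * (a + b))) \<le> 2 * Phi (m / k)"
    using assms k_pos by (simp add: Phi_mono)
  also have "\<dots> = Phi m"
    using Phi_mult_power[of 1 "m / k"] k_pos by simp
  also have "\<dots> \<le> Phi (\<bar>u\<bar> / a) + Phi (\<bar>v\<bar> / b)"
    unfolding m_def using Phi_nonneg by (auto simp: max_def)
  finally show ?thesis .
qed

lemma orlicz_admissible_add: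
  assumes f: "f \<in> borel_measurable M" "a \<in> orlicz_admissible M Phi f"
    and g: "g \<in> borel_measurable M" "b \<in> orlicz_admissible M Phi g"
  shows "k * (a + b) \<in> orlicz_admissible M Phi (\<lambda>x. f x + g x)"
proof -
  have ab: "a > 0" "b > 0"
    and int_le: "(\<integral>\<^sup>+ x. ennreal (Phi (\<bar>f x\<bar> / a)) \<partial>M) \<le> 1" "(\<integral>\<^sup>+ x. ennreal (Phi (\<bar>g x\<bar> / b)) \<partial>M) \<le> 1"
    using f(2) g(2) unfolding orlicz_admissible_def by auto
  have "2 * (\<integral>\<^sup>+ x. ennreal (Phi (\<bar>f x + g x\<bar> / (k * (a + b)))) \<partial>M)
      = (\<integral>\<^sup>+ x. 2 * ennreal (Phi (\<bar>f x + g x\<bar> / (k * (a + b)))) \<partial>M)"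
    by (rule nn_integral_cmult[symmetric]) (use f g in measurable)
  also have "\<dots> = (\<integral>\<^sup>+ x. ennreal (2 * Phi (\<bar>f x + g x\<bar> / (k * (a + b)))) \<partial>M)"
    using Phi_nonneg by (simp add: ennreal_mult)
  also have "\<dots> \<le> (\<integral>\<^sup>+ x. ennreal (Phi (\<bar>f x\<bar> / a)) + ennreal (Phi (\<bar>g x\<bar> / b)) \<partial>M)"
  proof (rule nn_integral_mono)
    fix x
    have "ennreal (2 * Phi (\<bar>f x + g x\<bar> / (k * (a + b)))) \<le> ennreal (Phi (\<bar>f x\<bar> / a) + Phi (\<bar>g x\<bar> / b))"
      by (rule ennreal_leI) (rule Phi_sum_le[OF ab])
    then show "ennreal (2 * Phi (\<bar>f x + g x\<bar> / (k * (a + b)))) \<le> ennreal (Phi (\<bar>f x\<bar> / a)) + ennreal (Phi (\<bar>g x\<bar> / b))"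
      by (simp add: Phi_nonneg)
  qed
  also have "\<dots> = (\<integral>\<^sup>+ x. ennreal (Phi (\<bar>f x\<bar> / a)) \<partial>M) + (\<integral>\<^sup>+ x. ennreal (Phi (\<bar>g x\<bar> / b)) \<partial>M)"
    by (rule nn_integral_add) (use f(1) g(1) in measurable)
  also have "\<dots> \<le> 2 * 1"
    using add_mono[OF int_le] by simp
  finally have "(\<integral>\<^sup>+ x. ennreal (Phi (\<bar>f x + g x\<bar> / (k * (a + b)))) \<partial>M) \<le> 1"
    by (subst (asm) ennreal_mult_le_mult_iff) auto
  then show ?thesis
    using ab k_pos unfolding orlicz_admissible_def by simp
qed

lemma orlicz_norm_eq_0_iff:
  assumes "f \<in> L_Phi M Phi"
  shows "orlicz_norm M Phi f = 0 \<longleftrightarrow> (AE x in M. f x = 0)"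
proof
  assume "AE x in M. f x = 0"
  then show "orlicz_norm M Phi f = 0"
    by (simp add: orlicz_norm_eq_Inf_admissible orlicz_admissible_AE_zero Phi_0)
next
  assume norm: "orlicz_norm M Phi f = 0"
  have f: "f \<in> borel_measurable M"
    using assms unfolding L_Phi_def by auto
  have "1 / k ^ n \<in> orlicz_admissible M Phi f" for n
  proof -
    obtain l where "l \<in> orlicz_admissible M Phi f" "l < 1 / k ^ n"
      using cInf_lessD[OF orlicz_admissible_nonempty[OF assms], of "1 / k ^ n"] norm k_pos
      by (auto simp: orlicz_norm_eq_Inf_admissible)
    then show ?thesis
      using Phi_mono by (blast intro: orlicz_admissible_upward_closed less_imp_le)
  qed
  then have "(\<integral>\<^sup>+ x. ennreal (Phi (\<bar>f x\<bar> * k ^ n)) \<partial>M) \<le> 1" for n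
    by (simp add: orlicz_admissible_def)
  then have "ennreal (2 ^ n) * (\<integral>\<^sup>+ x. ennreal (Phi (\<bar>f x\<bar>)) \<partial>M) \<le> 1" for n
    using f by (simp add: nn_integral_Phi_mult_power[symmetric] mult.commute)
  then have "(\<integral>\<^sup>+ x. ennreal (Phi (f x)) \<partial>M) = 0"
    by (intro ennreal_eq_0_if_mult_power_le_1) (simp add: Phi_abs)
  then have "AE x in M. ennreal (Phi (f x)) = 0"
    using f by (subst (asm) nn_integral_0_iff_AE) auto
  then show "AE x in M. f x = 0"
    by (rule eventually_mono) (metis Phi_abs Phi_pos zero_less_abs_iff ennreal_eq_0_iff not_le)
qed

lemma orlicz_norm_scale:
  assumes "f \<in> L_Phi M Phi"
  shows "orlicz_norm M Phi (\<lambda>x. \<alpha> * f x) = \<bar>\<alpha>\<bar> * orlicz_norm M Phi f"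
proof (cases "\<alpha> = 0")
  case True
  then show ?thesis
    by (simp add: orlicz_norm_eq_Inf_admissible orlicz_admissible_AE_zero Phi_0)
next
  case False
  then show ?thesis
    using Inf_scale_nonneg[OF orlicz_admissible_nonempty[OF assms] bdd_below_orlicz_admissible]
    by (simp add: orlicz_norm_eq_Inf_admissible orlicz_admissible_scale)
qed

lemma orlicz_norm_add_le:
  assumes f: "f \<in> L_Phi M Phi" and g: "g \<in> L_Phi M Phi"
  shows "orlicz_norm M Phi (\<lambda>x. f x + g x) \<le> k * (orlicz_norm M Phi f + orlicz_norm M Phi g)"
proof -
  let ?N = "orlicz_norm M Phi (\<lambda>x. f x + g x)"
  have "?N / k - b \<le> a"
    if "a \<in> orlicz_admissible M Phi f" "b \<in> orlicz_admissible M Phi g" for a b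
  proof -
    have "?N \<le> k * (a + b)"
      unfolding orlicz_norm_eq_Inf_admissible using f g that
      by (intro cInf_lower bdd_below_orlicz_admissible orlicz_admissible_add) (auto simp: L_Phi_def)
    then show ?thesis
      using k_pos by (simp add: field_simps)
  qed
  then have "?N / k - b \<le> orlicz_norm M Phi f" if "b \<in> orlicz_admissible M Phi g" for b
    unfolding orlicz_norm_eq_Inf_admissible using that
    by (intro cInf_greatest orlicz_admissible_nonempty[OF f]) auto
  then have "?N / k - orlicz_norm M Phi f \<le> orlicz_norm M Phi g"
    unfolding orlicz_norm_eq_Inf_admissible[of M Phi g]
    by (intro cInf_greatest orlicz_admissible_nonempty[OF g]) (auto simp: algebra_simps)
  then show ?thesis
    using k_pos by (simp add: field_simps)
qed

end

lemma N_star_function_k_doubling: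
  assumes "N_star_function Phi" "k > 0" "\<And>x. x > 0 \<Longrightarrow> Phi (k * x) = 2 * Phi x"
  shows "k_doubling_function Phi k"
  using assms by unfold_locales
    (auto simp: N_star_function_abs N_star_function_0 N_star_function_mono N_star_function_pos)

theorem mainTheorem10:
  fixes M :: "'a measure" and Phi :: "real \<Rightarrow> real" and k :: real
  assumes "N_star_function Phi"
    and "k \<ge> 2"
    and "\<forall>x>0. Phi (k * x) = 2 * Phi x"
  shows "(\<forall>f\<in>L_Phi M Phi. orlicz_norm M Phi f = 0 \<longleftrightarrow> (AE x in M. f x = 0))
       \<and> (\<forall>f\<in>L_Phi M Phi. \<forall>\<alpha>::real.
            orlicz_norm M Phi (\<lambda>x. \<alpha> * f x) = \<bar>\<alpha>\<bar> * orlicz_norm M Phi f)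
       \<and> (\<forall>f\<in>L_Phi M Phi. \<forall>g\<in>L_Phi M Phi.
            orlicz_norm M Phi (\<lambda>x. f x + g x)
              \<le> k * (orlicz_norm M Phi f + orlicz_norm M Phi g))"
proof -
  interpret k_doubling_function Phi k
    using assms by (intro N_star_function_k_doubling) auto
  show ?thesis
    using orlicz_norm_eq_0_iff orlicz_norm_scale orlicz_norm_add_le by blast
qed

end
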